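(* Let $t\ge 2$ be an even integer, let $p\ge 3$ be a prime with $p\equiv 1\pmod{t-1}$, and let $n_t=\frac{p(p-1)}{2(t-1)}$. Then $$ex(n_t,n_t,n_t,K_{2,t})\ge \frac{3p(p-1)^2}{4(t-1)}.$$
   Context: $K_{2,t}$ denotes the complete bipartite graph with parts of sizes $2$ and $t$. For an integer $n\ge1$, $ex(n,n,n,K_{2,t})$ is the maximum number of edges in a tripartite graph with three vertex classes each of size $n$ (edges only between different classes) that contains no subgraph isomorphic to $K_{2,t}$. *)

theory Defs
  imports "HOL-Number_Theory.Number_Theory"
begin

definition tri_vertices :: "nat \<Rightarrow> (nat \<times> nat) set" where
  "tri_vertices n = {0..<3} \<times> {0..<n}"

definition tripartite_graph :: "nat \<Rightarrow> (nat \<times> nat) set set \<Rightarrow> bool" where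
  "tripartite_graph n E \<longleftrightarrow>
     (\<forall>e\<in>E. \<exists>u v. e = {u, v} \<and> u \<in> tri_vertices n \<and> v \<in> tri_vertices n \<and> fst u \<noteq> fst v)"

definition contains_K2t :: "(nat \<times> nat) set set \<Rightarrow> nat \<Rightarrow> bool" where
  "contains_K2t E t \<longleftrightarrow>
     (\<exists>a b T. a \<noteq> b \<and> finite T \<and> card T = t \<and> a \<notin> T \<and> b \<notin> T \<and>
        (\<forall>x\<in>T. {a, x} \<in> E \<and> {b, x} \<in> E))"

definition ex3_K2t :: "nat \<Rightarrow> nat \<Rightarrow> nat" where
  "ex3_K2t n t = Max {card E | E. tripartite_graph n E \<and> \<not> contains_K2t E t}"

end

theory Submission
  imports Defs
begin

text \<open>Write \<open>p - 1 = 2 N (t - 1)\<close> and let \<open>g\<close> be a primitive root modulo \<open>p\<close>. A vertex of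
  each class is a pair \<open>(x, c)\<close> with \<open>x \<in> \<bbbF>\<^sub>p\<close> and \<open>c < N\<close>. Vertices \<open>(x, c)\<close> and
  \<open>(x', c')\<close> of classes \<open>i\<close> and \<open>i + 1 (mod 3)\<close> are adjacent iff \<open>x + g x'\<close> lies in the coset
  \<open>g\<^bsup>2(c + c')\<^esup> H\<close> of the subgroup \<open>H = \<langle>g\<^bsup>2N\<^esup>\<rangle>\<close> of order \<open>t - 1\<close>. Every vertex
  then has \<open>(p - 1) / 2\<close> neighbours in the next class, which gives the claimed number of edges.

  If \<open>a, b\<close> had \<open>t\<close> common neighbours, pigeonhole over the \<open>t - 1\<close> cosets of \<open>H\<close> gives two
  of them, \<open>x\<close> and \<open>y\<close>, with \<open>L(a,x) L(b,y) = L(a,y) L(b,x)\<close> for the linear forms \<open>L\<close>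
  above. If \<open>a, b\<close> lie in one class, the difference of the two sides factors as
  \<open>(x\<^sub>a - x\<^sub>b)\<close> times a linear expression: the first factor vanishing forces \<open>a = b\<close>; the
  second forces \<open>x = y\<close> or makes \<open>g\<close> times a square a square, impossible for a primitive
  root. If \<open>a, b\<close> lie in different classes, then \<open>x, y\<close> lie in the third one and the roles
  of the two pairs can be swapped.\<close>

lemma cong_iff_int_dvd_diff: "[a = b] (mod m) \<longleftrightarrow> int m dvd int a - int b"
  for a b m :: nat
  by (simp add: cong_int_iff [symmetric] cong_iff_dvd_diff)

lemma cong_mult_cancel_modulus:
  fixes a b k m :: nat
  assumes "[k * a = k * b] (mod (k * m))" "k > 0"
  shows "[a = b] (mod m)"
  using assms by (simp add: cong_def mod_mult_mult1)

lemma primroot_power_cong_iff: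
  assumes "prime p" "residue_primroot p g"
  shows "[g ^ a = g ^ b] (mod p) \<longleftrightarrow> [a = b] (mod (p - 1))"
  using assms order_divides_expdiff[of p g a b]
  by (simp add: residue_primroot_def totient_prime)

lemma primroot_times_square_not_square:
  assumes "prime p" "even (p - 1)" "residue_primroot p g"
  shows "\<not> [g * g ^ (2 * a) = g ^ (2 * b)] (mod p)"
proof
  assume "[g * g ^ (2 * a) = g ^ (2 * b)] (mod p)"
  then have "[g ^ Suc (2 * a) = g ^ (2 * b)] (mod p)" by simp
  then have "[Suc (2 * a) = 2 * b] (mod (p - 1))"
    using primroot_power_cong_iff[OF assms(1,3)] by blast
  moreover have "2 dvd p - 1" using assms(2) .
  ultimately have "[Suc (2 * a) = 2 * b] (mod 2)" by (rule cong_dvd_modulus_nat)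
  then show False by (simp add: cong_def)
qed

lemma Suc_mod_3_cases:
  fixes i j :: nat
  assumes "i < 3" "j < 3" "i \<noteq> j"
  shows "j = Suc i mod 3 \<or> i = Suc j mod 3"
proof -
  have "i = 0 \<or> i = 1 \<or> i = 2" "j = 0 \<or> j = 1 \<or> j = 2" using assms(1,2) by auto
  then show ?thesis using assms(3) by (elim disjE) simp_all
qed

lemma Suc_mod_3_asym:
  fixes i :: nat
  assumes "i < 3"
  shows "Suc (Suc i mod 3) mod 3 \<noteq> i"
proof -
  have "i = 0 \<or> i = 1 \<or> i = 2" using assms by auto
  then show ?thesis by (elim disjE) simp_all
qed

lemma third_class_unique:
  fixes i j k k' :: nat
  assumes "i < 3" "j < 3" "k < 3" "k' < 3" "i \<noteq> j"
    and "k \<noteq> i" "k \<noteq> j" "k' \<noteq> i" "k' \<noteq> j"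
  shows "k = k'"
proof -
  have "i = 0 \<or> i = 1 \<or> i = 2" "j = 0 \<or> j = 1 \<or> j = 2"
    "k = 0 \<or> k = 1 \<or> k = 2" "k' = 0 \<or> k' = 1 \<or> k' = 2"
    using assms(1-4) by auto
  then show ?thesis using assms(5-9) by (elim disjE) simp_all
qed

lemma card_tri_vertices: "card (tri_vertices n) = 3 * n"
  by (simp add: tri_vertices_def card_cartesian_product)

lemma ex3_K2t_ge:
  assumes "tripartite_graph n E" "\<not> contains_K2t E t"
  shows "card E \<le> ex3_K2t n t"
proof -
  let ?S = "{card E | E. tripartite_graph n E \<and> \<not> contains_K2t E t}"
  have "E' \<subseteq> Pow (tri_vertices n)" if tri: "tripartite_graph n E'" for E'
  proof
    fix e assume "e \<in> E'"
    then obtain u v where "e = {u, v}" "u \<in> tri_vertices n" "v \<in> tri_vertices n"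
      using tri unfolding tripartite_graph_def by blast
    then show "e \<in> Pow (tri_vertices n)" by simp
  qed
  then have "?S \<subseteq> card ` Pow (Pow (tri_vertices n))" by blast
  moreover have "finite (tri_vertices n)" by (simp add: tri_vertices_def)
  ultimately have "finite ?S" by (simp add: finite_subset)
  moreover have "card E \<in> ?S" using assms by blast
  ultimately show ?thesis unfolding ex3_K2t_def by (rule Max_ge)
qed

locale coset_graph =
  fixes p t g N :: nat
  assumes prime_p: "prime p"
    and primroot: "residue_primroot p g"
    and p_minus_1_eq: "p - 1 = 2 * N * (t - 1)"
begin

lemma coprime_p_g: "coprime p g"
  using primroot by (simp add: residue_primroot_def)

lemma N_pos: "N > 0" and t_ge_2: "t \<ge> 2"
proof -
  have "p - 1 \<noteq> 0" using prime_gt_1_nat[OF prime_p] by simp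
  then have "N \<noteq> 0" "t - 1 \<noteq> 0" unfolding p_minus_1_eq by auto
  then show "N > 0" "t \<ge> 2" by auto
qed

lemma power_cong_iff: "[g ^ a = g ^ b] (mod p) \<longleftrightarrow> [a = b] (mod (2 * N * (t - 1)))"
  using primroot_power_cong_iff[OF prime_p primroot] p_minus_1_eq by simp

lemma even_power_cong_block_eq:
  assumes "[g ^ (2 * (a + c + N * l)) = g ^ (2 * (a + c' + N * l'))] (mod p)"
    and "c < N" "c' < N"
  shows "c = c'"
proof -
  have "[2 * (a + c + N * l) = 2 * (a + c' + N * l')] (mod (2 * N))"
    using assms(1) power_cong_iff cong_modulus_mult_nat by blast
  then have "[a + c + N * l = a + c' + N * l'] (mod N)"
    by (rule cong_mult_cancel_modulus) simp
  then have "[a + c = a + c'] (mod N)"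
    by (simp add: cong_def)
  then have "[c = c'] (mod N)"
    unfolding cong_add_lcancel_nat .
  then show ?thesis using assms(2,3) cong_less_modulus_unique_nat by blast
qed

lemma times_g_not_square:
  assumes "[P = g ^ (2 * a)] (mod p)" "[Q = g ^ (2 * b)] (mod p)"
  shows "\<not> [g * P = Q] (mod p)"
proof
  assume "[g * P = Q] (mod p)"
  then have "[g * g ^ (2 * a) = g ^ (2 * b)] (mod p)"
    using assms by (meson cong_scalar_left cong_sym cong_trans)
  moreover have "even (p - 1)" using p_minus_1_eq by simp
  ultimately show False using primroot_times_square_not_square[OF prime_p _ primroot] by blast
qed

lemma cross_products_cong:
  assumes "[P11 = g ^ (2 * (c1 + d1 + N * l11))] (mod p)" "[P12 = g ^ (2 * (c1 + d2 + N * l12))] (mod p)"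
    and "[P21 = g ^ (2 * (c2 + d1 + N * l21))] (mod p)" "[P22 = g ^ (2 * (c2 + d2 + N * l22))] (mod p)"
    and "[int l11 - int l21 = int l12 - int l22] (mod int (t - 1))"
  shows "[P11 * P22 = P12 * P21] (mod p)"
proof -
  define E1 where "E1 = 2 * (c1 + d1 + N * l11) + 2 * (c2 + d2 + N * l22)"
  define E2 where "E2 = 2 * (c1 + d2 + N * l12) + 2 * (c2 + d1 + N * l21)"
  have "[P11 * P22 = g ^ E1] (mod p)"
    unfolding E1_def power_add using assms(1,4) by (rule cong_mult)
  also have "[g ^ E1 = g ^ E2] (mod p)"
  proof -
    have "int (t - 1) dvd (int l11 - int l21) - (int l12 - int l22)"
      using assms(5) by (simp add: cong_iff_dvd_diff)
    then have "int (2 * N) * int (t - 1) dvd int (2 * N) * ((int l11 - int l21) - (int l12 - int l22))"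
      by (rule mult_dvd_mono[OF dvd_refl])
    moreover have "int E1 - int E2 = int (2 * N) * ((int l11 - int l21) - (int l12 - int l22))"
      unfolding E1_def E2_def by (simp add: algebra_simps)
    ultimately show ?thesis
      unfolding power_cong_iff by (simp add: cong_iff_int_dvd_diff)
  qed
  also have "[g ^ E2 = P12 * P21] (mod p)"
    unfolding E2_def power_add using assms(2,3) by (rule cong_sym[OF cong_mult])
  finally show ?thesis .
qed

text \<open>A vertex \<open>(i, j)\<close> stands for the pair \<open>(j mod p, j div p)\<close> in class \<open>i\<close>.\<close>

definition coord :: "nat \<times> nat \<Rightarrow> nat" where
  "coord v = snd v mod p"

definition block :: "nat \<times> nat \<Rightarrow> nat" where
  "block v = snd v div p"

definition coef :: "nat \<Rightarrow> nat \<Rightarrow> nat" where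
  "coef i j = (if j = Suc i mod 3 then 1 else g)"

definition form :: "nat \<times> nat \<Rightarrow> nat \<times> nat \<Rightarrow> nat" where
  "form v w = coef (fst v) (fst w) * coord v + coef (fst w) (fst v) * coord w"

definition adj :: "nat \<times> nat \<Rightarrow> nat \<times> nat \<Rightarrow> bool" where
  "adj v w \<longleftrightarrow> v \<in> tri_vertices (p * N) \<and> w \<in> tri_vertices (p * N) \<and> fst v \<noteq> fst w \<and>
     (\<exists>l. [form v w = g ^ (2 * (block v + block w + N * l))] (mod p))"

definition edges :: "(nat \<times> nat) set set" where
  "edges = {{v, w} | v w. adj v w}"

lemma form_sym: "form v w = form w v"
  by (simp add: form_def)

lemma adj_sym: "adj v w \<Longrightarrow> adj w v"
  unfolding adj_def by (auto simp: form_sym ac_simps)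

lemma adj_if_edge: "{v, w} \<in> edges \<Longrightarrow> adj v w"
  unfolding edges_def by (auto simp: doubleton_eq_iff dest: adj_sym)

lemma tripartite_edges: "tripartite_graph (p * N) edges"
  unfolding tripartite_graph_def edges_def adj_def tri_vertices_def by auto

lemma coord_less: "coord v < p"
  using prime_gt_0_nat[OF prime_p] by (simp add: coord_def)

lemma block_less: "v \<in> tri_vertices (p * N) \<Longrightarrow> block v < N"
  by (auto simp: block_def tri_vertices_def less_mult_imp_div_less mult.commute)

lemma vertex_eqI: "fst v = fst w \<Longrightarrow> coord v = coord w \<Longrightarrow> block v = block w \<Longrightarrow> v = w"
  unfolding coord_def block_def by (metis div_mult_mod_eq prod_eqI)

lemma coprime_coef: "coprime (coef i j) p"
  using coprime_p_g by (simp add: coef_def coprime_commute)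

lemma coef_other_classes:
  assumes "i < 3" "j < 3" "k < 3" "i \<noteq> j" "i \<noteq> k" "j \<noteq> k"
  shows "coef i j = 1 \<and> coef i k = g \<or> coef i j = g \<and> coef i k = 1"
proof -
  have "i = 0 \<or> i = 1 \<or> i = 2" "j = 0 \<or> j = 1 \<or> j = 2" "k = 0 \<or> k = 1 \<or> k = 2"
    using assms(1-3) by auto
  then show ?thesis using assms(4-6) unfolding coef_def by (elim disjE) simp_all
qed

lemma adj_classes: "adj v w \<Longrightarrow> fst v < 3 \<and> fst w < 3 \<and> fst v \<noteq> fst w"
  unfolding adj_def tri_vertices_def by auto

lemma adj_form_square: "adj v w \<Longrightarrow> \<exists>e. [form v w = g ^ (2 * e)] (mod p)"
  unfolding adj_def by blast

lemma neighbours_eqI: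
  assumes "adj v x" "adj v y" "fst x = fst y" "[form v x = form v y] (mod p)"
  shows "x = y"
proof -
  obtain l l' where
    l: "[form v x = g ^ (2 * (block v + block x + N * l))] (mod p)" and
    l': "[form v y = g ^ (2 * (block v + block y + N * l'))] (mod p)"
    using assms(1,2) unfolding adj_def by blast
  have "[g ^ (2 * (block v + block x + N * l)) = g ^ (2 * (block v + block y + N * l'))] (mod p)"
    using l l' assms(4) by (meson cong_sym cong_trans)
  then have "block x = block y"
    using even_power_cong_block_eq block_less assms(1,2) unfolding adj_def by blast
  have "[coef (fst x) (fst v) * coord x = coef (fst x) (fst v) * coord y] (mod p)"
    using assms(3,4) unfolding form_def by (simp add: cong_add_lcancel_nat)
  then have "[coord x = coord y] (mod p)"
    using cong_mult_lcancel_nat coprime_coef by blast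
  then have "coord x = coord y"
    using cong_less_modulus_unique_nat coord_less by blast
  then show ?thesis using assms(3) \<open>block x = block y\<close> vertex_eqI by blast
qed

lemma cross_difference_within_class:
  assumes "fst a = fst b"
  shows "int (form a x) * int (form b y) - int (form a y) * int (form b x)
    = (int (coord a) - int (coord b)) *
      (int (coef (fst a) (fst x) * form a y) - int (coef (fst a) (fst y) * form a x))"
  using assms unfolding form_def by (simp add: algebra_simps)

lemma no_rectangle_within_class:
  assumes "fst a = fst b" "a \<noteq> b" "x \<noteq> y"
    and "adj a x" "adj b x" "adj a y" "adj b y"
    and "[form a x * form b y = form a y * form b x] (mod p)"
  shows False
proof -
  define \<alpha> \<alpha>' where "\<alpha> = coef (fst a) (fst x)" and "\<alpha>' = coef (fst a) (fst y)"
  have "int (form a x) * int (form b y) - int (form a y) * int (form b x)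
      = (int (coord a) - int (coord b)) * (int (\<alpha> * form a y) - int (\<alpha>' * form a x))"
    using cross_difference_within_class[OF assms(1)] unfolding \<alpha>_def \<alpha>'_def .
  moreover have "int p dvd int (form a x) * int (form b y) - int (form a y) * int (form b x)"
    using assms(8) unfolding cong_iff_int_dvd_diff by simp
  ultimately have "int p dvd int (coord a) - int (coord b) \<or>
      int p dvd int (\<alpha> * form a y) - int (\<alpha>' * form a x)"
    using prime_p by (simp add: prime_dvd_mult_iff)
  then show False
  proof
    assume "int p dvd int (coord a) - int (coord b)"
    then have "coord a = coord b"
      using cong_iff_int_dvd_diff cong_less_modulus_unique_nat coord_less by blast
    then have "form x a = form x b" using assms(1) by (simp add: form_def)
    then show False using neighbours_eqI adj_sym assms(1,2,4,5) by (metis cong_refl)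
  next
    assume "int p dvd int (\<alpha> * form a y) - int (\<alpha>' * form a x)"
    then have eq: "[\<alpha> * form a y = \<alpha>' * form a x] (mod p)"
      unfolding cong_iff_int_dvd_diff .
    show False
    proof (cases "fst x = fst y")
      case True
      then have "[form a x = form a y] (mod p)"
        using eq cong_mult_lcancel_nat coprime_coef unfolding \<alpha>_def \<alpha>'_def by (metis cong_sym)
      then show False using neighbours_eqI True assms(3,4,6) by blast
    next
      case False
      obtain e e' where "[form a x = g ^ (2 * e)] (mod p)" "[form a y = g ^ (2 * e')] (mod p)"
        using adj_form_square assms(4,6) by blast
      moreover have "\<alpha> = 1 \<and> \<alpha>' = g \<or> \<alpha> = g \<and> \<alpha>' = 1"
        using coef_other_classes[of "fst a" "fst x" "fst y"] False adj_classes assms(4,6)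
        unfolding \<alpha>_def \<alpha>'_def by blast
      ultimately show False
        using eq times_g_not_square by (metis cong_sym mult_1)
    qed
  qed
qed

lemma no_rectangle:
  assumes "a \<noteq> b" "x \<noteq> y" "adj a x" "adj b x" "adj a y" "adj b y"
    and "[form a x * form b y = form a y * form b x] (mod p)"
  shows False
proof (cases "fst a = fst b")
  case True
  then show False using no_rectangle_within_class assms by blast
next
  case False
  have "fst x = fst y"
    using False adj_classes[OF assms(3)] adj_classes[OF assms(4)] adj_classes[OF assms(5)]
      adj_classes[OF assms(6)]
    by (intro third_class_unique[of "fst a" "fst b"]) auto
  moreover have "[form x a * form y b = form x b * form y a] (mod p)"
    using assms(7) by (simp add: form_sym mult.commute)
  ultimately show False
    using no_rectangle_within_class[of x y a b] adj_sym assms(1-6) by blast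
qed

lemma K2t_free: "\<not> contains_K2t edges t"
proof
  assume "contains_K2t edges t"
  then obtain a b T where "a \<noteq> b" "finite T" "card T = t"
    and "\<forall>x\<in>T. {a, x} \<in> edges \<and> {b, x} \<in> edges"
    unfolding contains_K2t_def by blast
  then have adj: "adj a x" "adj b x" if "x \<in> T" for x
    using that adj_if_edge by blast+
  obtain l1 l2 where
    l1: "\<And>x. x \<in> T \<Longrightarrow> [form a x = g ^ (2 * (block a + block x + N * l1 x))] (mod p)" and
    l2: "\<And>x. x \<in> T \<Longrightarrow> [form b x = g ^ (2 * (block b + block x + N * l2 x))] (mod p)"
    using adj unfolding adj_def by metis
  \<comment> \<open>\<open>d x\<close> determines the coset of \<open>\<langle>g\<^bsup>2N\<^esup>\<rangle>\<close> containing \<open>form a x / form b x\<close>\<close>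
  define d where "d x = (int (l1 x) - int (l2 x)) mod int (t - 1)" for x
  have "d ` T \<subseteq> {0..<int (t - 1)}"
    using t_ge_2 by (auto simp: d_def)
  then have "card (d ` T) < card T"
    using card_mono[of "{0..<int (t - 1)}" "d ` T"] \<open>card T = t\<close> t_ge_2 by simp
  then obtain x y where "x \<in> T" "y \<in> T" "x \<noteq> y" "d x = d y"
    using pigeonhole unfolding inj_on_def by blast
  then have "[form a x * form b y = form a y * form b x] (mod p)"
    using cross_products_cong l1 l2 unfolding d_def cong_def by blast
  then show False
    using no_rectangle \<open>a \<noteq> b\<close> \<open>x \<noteq> y\<close> adj \<open>x \<in> T\<close> \<open>y \<in> T\<close> by blast
qed

lemma g_times_g_power_p_minus_2: "[g * g ^ (p - 2) = 1] (mod p)"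
proof -
  have "g * g ^ (p - 2) = g ^ (p - 1)"
    using prime_gt_1_nat[OF prime_p] by (simp flip: power_Suc add: Suc_diff_Suc numeral_2_eq_2)
  also have "[g ^ (p - 1) = g ^ 0] (mod p)"
    unfolding power_cong_iff p_minus_1_eq by (simp add: cong_def)
  finally show ?thesis by simp
qed

text \<open>The summand \<open>(p - 1) * x\<close> stands for \<open>-x\<close>, avoiding truncated subtraction.\<close>

definition next_coord :: "nat \<Rightarrow> nat \<Rightarrow> nat" where
  "next_coord x r = g ^ (p - 2) * (r + (p - 1) * x) mod p"

lemma next_coord_less: "next_coord x r < p"
  using prime_gt_0_nat[OF prime_p] by (simp add: next_coord_def)

lemma next_coord_cong: "[x + g * next_coord x r = r] (mod p)"
proof -
  have "[g * next_coord x r = (g * g ^ (p - 2)) * (r + (p - 1) * x)] (mod p)"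
    unfolding next_coord_def cong_def by (simp add: mod_mult_right_eq mult.assoc)
  also have "[(g * g ^ (p - 2)) * (r + (p - 1) * x) = 1 * (r + (p - 1) * x)] (mod p)"
    using g_times_g_power_p_minus_2 by (rule cong_scalar_right)
  finally have "[x + g * next_coord x r = x + (r + (p - 1) * x)] (mod p)"
    by (simp add: cong_add_lcancel_nat)
  also have "x + (r + (p - 1) * x) = r + p * x"
    using prime_gt_0_nat[OF prime_p] by (simp add: algebra_simps mult_eq_if)
  also have "[r + p * x = r] (mod p)"
    by (simp add: cong_def)
  finally show ?thesis .
qed

definition forward_neighbour :: "nat \<times> nat \<Rightarrow> nat \<Rightarrow> nat \<times> nat" where
  "forward_neighbour v k =
     (Suc (fst v) mod 3, next_coord (coord v) (g ^ (2 * (block v + k))) + p * (k mod N))"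

lemma fst_forward_neighbour: "fst (forward_neighbour v k) = Suc (fst v) mod 3"
  by (simp add: forward_neighbour_def)

lemma coord_forward_neighbour:
  "coord (forward_neighbour v k) = next_coord (coord v) (g ^ (2 * (block v + k)))"
  using next_coord_less by (simp add: forward_neighbour_def coord_def)

lemma block_forward_neighbour: "block (forward_neighbour v k) = k mod N"
  using next_coord_less prime_gt_0_nat[OF prime_p] by (simp add: forward_neighbour_def block_def)

lemma form_forward:
  assumes "fst v < 3" "fst w = Suc (fst v) mod 3"
  shows "form v w = coord v + g * coord w"
  using assms Suc_mod_3_asym[OF assms(1)] by (simp add: form_def coef_def)

lemma forward_neighbour_mem: "v \<in> tri_vertices (p * N) \<Longrightarrow> forward_neighbour v k \<in> tri_vertices (p * N)"
proof -
  have "next_coord (coord v) (g ^ (2 * (block v + k))) + p * (k mod N) < p + p * (k mod N)"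
    using next_coord_less by simp
  also have "\<dots> = p * Suc (k mod N)" by simp
  also have "\<dots> \<le> p * N" using N_pos by (intro mult_le_mono2 Suc_leI mod_less_divisor)
  finally show ?thesis by (simp add: forward_neighbour_def tri_vertices_def)
qed

lemma adj_forward_neighbour:
  assumes "v \<in> tri_vertices (p * N)"
  shows "adj v (forward_neighbour v k)"
proof -
  let ?w = "forward_neighbour v k"
  have i: "fst v < 3" using assms by (auto simp: tri_vertices_def)
  then have "fst ?w = Suc (fst v) mod 3" "fst v \<noteq> fst ?w"
    using Suc_mod_3_asym[OF i] by (auto simp: fst_forward_neighbour)
  then have "[form v ?w = g ^ (2 * (block v + k))] (mod p)"
    using form_forward[OF i] next_coord_cong by (simp add: coord_forward_neighbour)
  moreover have "block v + block ?w + N * (k div N) = block v + k"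
    by (simp add: block_forward_neighbour)
  ultimately have "[form v ?w = g ^ (2 * (block v + block ?w + N * (k div N)))] (mod p)"
    by (simp only:)
  then show ?thesis
    using assms forward_neighbour_mem \<open>fst v \<noteq> fst ?w\<close> unfolding adj_def by blast
qed

lemma inj_on_forward_neighbour: "inj_on (forward_neighbour v) {..<N * (t - 1)}"
proof (rule inj_onI)
  fix k k' assume k: "k \<in> {..<N * (t - 1)}" "k' \<in> {..<N * (t - 1)}"
    and eq: "forward_neighbour v k = forward_neighbour v k'"
  have "[g ^ (2 * (block v + k)) = g ^ (2 * (block v + k'))] (mod p)"
    using next_coord_cong[of "coord v"] eq coord_forward_neighbour
    by (metis cong_sym cong_trans)
  then have "[2 * (block v + k) = 2 * (block v + k')] (mod (2 * (N * (t - 1))))"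
    unfolding power_cong_iff by (simp add: mult.assoc)
  then have "[block v + k = block v + k'] (mod (N * (t - 1)))"
    by (rule cong_mult_cancel_modulus) simp
  then show "k = k'"
    using k cong_less_modulus_unique_nat unfolding cong_add_lcancel_nat by blast
qed

lemma forward_neighbour_cases:
  assumes "adj v w" "fst w = Suc (fst v) mod 3"
  obtains k where "k < N * (t - 1)" "w = forward_neighbour v k"
proof -
  obtain l where l: "[form v w = g ^ (2 * (block v + block w + N * l))] (mod p)"
    using assms(1) unfolding adj_def by blast
  define k where "k = (block w + N * l) mod (N * (t - 1))"
  have "k < N * (t - 1)" using N_pos t_ge_2 by (simp add: k_def)
  have bw: "block w < N" using assms(1) block_less unfolding adj_def by blast
  have "k mod N = block w"
    unfolding k_def using bw by (simp add: mod_mod_cancel)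
  have "[k = block w + N * l] (mod (N * (t - 1)))"
    by (simp add: k_def cong_def)
  then have "[2 * (block v + k) = 2 * (block v + block w + N * l)] (mod (2 * N * (t - 1)))"
    unfolding mult.assoc by (intro cong_cmult_leftI) (simp add: cong_add_lcancel_nat add.assoc)
  then have "[coord v + g * next_coord (coord v) (g ^ (2 * (block v + k))) = coord v + g * coord w] (mod p)"
    using next_coord_cong l form_forward assms adj_classes
    unfolding power_cong_iff[symmetric] by (metis cong_sym cong_trans)
  then have "[next_coord (coord v) (g ^ (2 * (block v + k))) = coord w] (mod p)"
    using cong_mult_lcancel_nat coprime_p_g unfolding cong_add_lcancel_nat
    by (metis coprime_commute)
  then have "coord (forward_neighbour v k) = coord w"
    using cong_less_modulus_unique_nat next_coord_less coord_less
    unfolding coord_forward_neighbour by blast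
  moreover have "fst (forward_neighbour v k) = fst w"
    using assms(2) by (simp add: fst_forward_neighbour)
  ultimately have "w = forward_neighbour v k"
    using vertex_eqI block_forward_neighbour \<open>k mod N = block w\<close> by metis
  then show ?thesis using that \<open>k < N * (t - 1)\<close> by blast
qed

definition forward_edge :: "(nat \<times> nat) \<times> nat \<Rightarrow> (nat \<times> nat) set" where
  "forward_edge = (\<lambda>(v, k). {v, forward_neighbour v k})"

lemma edges_eq_image: "edges = forward_edge ` (tri_vertices (p * N) \<times> {..<N * (t - 1)})"
proof
  show "edges \<subseteq> forward_edge ` (tri_vertices (p * N) \<times> {..<N * (t - 1)})"
  proof
    fix e assume "e \<in> edges"
    then obtain v w where e: "e = {v, w}" and vw: "adj v w" unfolding edges_def by blast
    consider "fst w = Suc (fst v) mod 3" | "fst v = Suc (fst w) mod 3"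
      using Suc_mod_3_cases adj_classes[OF vw] by blast
    then show "e \<in> forward_edge ` (tri_vertices (p * N) \<times> {..<N * (t - 1)})"
    proof cases
      case 1
      then obtain k where "k < N * (t - 1)" "w = forward_neighbour v k"
        using forward_neighbour_cases vw by blast
      moreover have "v \<in> tri_vertices (p * N)" using vw by (simp add: adj_def)
      ultimately show ?thesis unfolding e forward_edge_def by force
    next
      case 2
      then obtain k where "k < N * (t - 1)" "v = forward_neighbour w k"
        using forward_neighbour_cases adj_sym[OF vw] by blast
      moreover have "w \<in> tri_vertices (p * N)" using vw by (simp add: adj_def)
      ultimately show ?thesis unfolding e forward_edge_def by (force simp: insert_commute)
    qed
  qed
  show "forward_edge ` (tri_vertices (p * N) \<times> {..<N * (t - 1)}) \<subseteq> edges"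
  proof (rule image_subsetI)
    fix x assume "x \<in> tri_vertices (p * N) \<times> {..<N * (t - 1)}"
    then obtain v k where "x = (v, k)" "v \<in> tri_vertices (p * N)" by blast
    then show "forward_edge x \<in> edges"
      unfolding forward_edge_def edges_def using adj_forward_neighbour by blast
  qed
qed

lemma inj_on_forward_edge: "inj_on forward_edge (tri_vertices (p * N) \<times> {..<N * (t - 1)})"
proof (rule inj_onI)
  fix x y
  assume "x \<in> tri_vertices (p * N) \<times> {..<N * (t - 1)}" "y \<in> tri_vertices (p * N) \<times> {..<N * (t - 1)}"
    and xy: "forward_edge x = forward_edge y"
  then obtain v k v' k' where x: "x = (v, k)" and y: "y = (v', k')"
    and "v \<in> tri_vertices (p * N)" and k: "k \<in> {..<N * (t - 1)}" "k' \<in> {..<N * (t - 1)}"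
    by blast
  have eq: "{v, forward_neighbour v k} = {v', forward_neighbour v' k'}"
    using xy unfolding x y forward_edge_def by simp
  have "fst v < 3" using \<open>v \<in> tri_vertices (p * N)\<close> by (auto simp: tri_vertices_def)
  have "v = v' \<and> forward_neighbour v k = forward_neighbour v' k' \<or>
      v = forward_neighbour v' k' \<and> forward_neighbour v k = v'"
    using eq by (simp add: doubleton_eq_iff)
  moreover have "\<not> (v = forward_neighbour v' k' \<and> forward_neighbour v k = v')"
  proof
    assume "v = forward_neighbour v' k' \<and> forward_neighbour v k = v'"
    then have "fst v = Suc (fst v') mod 3" "fst v' = Suc (fst v) mod 3"
      using fst_forward_neighbour by metis+
    then have "fst v = Suc (Suc (fst v) mod 3) mod 3" by simp
    then show False using Suc_mod_3_asym[OF \<open>fst v < 3\<close>] by simp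
  qed
  ultimately show "x = y"
    using inj_on_forward_neighbour k unfolding x y inj_on_def by blast
qed

lemma card_edges: "card edges = 3 * (p * N) * (N * (t - 1))"
  using card_image[OF inj_on_forward_edge]
  by (simp add: edges_eq_image card_cartesian_product card_tri_vertices)

end

lemma two_mult_dvd_pred_prime:
  fixes p t :: nat
  assumes "even t" "t \<ge> 2" "prime p" "p \<ge> 3" "[p = 1] (mod (t - 1))"
  shows "2 * (t - 1) dvd p - 1"
proof -
  have "2 dvd p - 1" using prime_odd_nat[OF assms(3)] assms(4) by simp
  moreover have "t - 1 dvd p - 1" using assms(5) cong_to_1_nat by blast
  moreover have "coprime 2 (t - 1)" using assms(1,2) by simp
  ultimately show ?thesis by (rule divides_mult)
qed

theorem theorem2:
  fixes t p :: nat
  assumes "even t" and "t \<ge> 2" and "prime p" and "p \<ge> 3"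
    and "[p = 1] (mod (t - 1))"
  shows "real (ex3_K2t (p * (p - 1) div (2 * (t - 1))) t)
           \<ge> 3 * real p * (real p - 1)^2 / (4 * (real t - 1))"
proof -
  define N where "N = (p - 1) div (2 * (t - 1))"
  have p_minus_1: "p - 1 = 2 * N * (t - 1)"
    using dvd_mult_div_cancel[OF two_mult_dvd_pred_prime[OF assms]] unfolding N_def
    by (metis mult.commute mult.assoc)
  obtain g where "residue_primroot p g"
    using prime_primitive_root_exists[of p] prime_gt_1_nat assms(3) by blast
  then interpret coset_graph p t g N
    using assms(3) p_minus_1 by unfold_locales
  have n: "p * (p - 1) div (2 * (t - 1)) = p * N"
    unfolding p_minus_1 using assms(2) by simp
  have real_p_minus_1: "real p - 1 = 2 * real N * (real t - 1)"
  proof -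
    have "real (p - 1) = real (2 * N * (t - 1))" using p_minus_1 by simp
    then show ?thesis using assms(2,4) by (simp add: of_nat_diff)
  qed
  have "3 * real p * (real p - 1)^2 / (4 * (real t - 1)) = real (3 * (p * N) * (N * (t - 1)))"
    unfolding real_p_minus_1 using assms(2) by (simp add: power2_eq_square of_nat_diff field_simps)
  also have "\<dots> \<le> real (ex3_K2t (p * N) t)"
    using ex3_K2t_ge[OF tripartite_edges K2t_free] unfolding card_edges of_nat_le_iff .
  finally show ?thesis unfolding n .
qed

end
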